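(* Let $c\ge1$, $\eta=1+2\log c$, $V(k)=k^2-2\log k$ for $k>0$, and let $k_{\min}\le 1$ be the unique $k\le1$ with $V(k)=\eta$. Let $k_{\min}\le k_1<1$ and $0<k_0\le k_1$, and put $\bar V(k)=(1+\frac1{k_0})(k-1)^2+H$ where $H$ is chosen so that $\bar V(k_1)=V(k_1)$. Then $V(k)>\bar V(k)$ for all $k\in(k_1,1)$, and for every $k_1<k_2\le1$, \[\int_{k_1}^{k_2}\frac{dk}{\sqrt{\eta-V(k)}}>\frac{1}{\sqrt{1+\frac1{k_0}}}\left(\sin^{-1}\Big(\frac{1-k_1}{a}\Big)-\sin^{-1}\Big(\frac{1-k_2}{a}\Big)\right),\qquad a=\sqrt{\frac{\eta-H}{1+\frac1{k_0}}}.\] Moreover, if $k_1=k_{\min}$ then $a=1-k_{\min}$. *)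

theory Defs
  imports "HOL-Analysis.Analysis"
begin

definition Vpot :: "real \<Rightarrow> real" where
  "Vpot k = k^2 - 2 * ln k"

definition Vbar :: "real \<Rightarrow> real \<Rightarrow> real \<Rightarrow> real" where
  "Vbar k0 H k = (1 + 1 / k0) * (k - 1)^2 + H"

end

theory Submission
  imports Defs
begin

(*
  By the tangent bound ln t \<le> t - 1, the potential V lies above each of its tangent
  lines by at least the square of the displacement. Hence V is strictly decreasing on
  (0, 1] and falls at least linearly to the right of k1, so 1 / sqrt (\<eta> - V) has at worst
  an inverse square root singularity at k1 and is integrable. The difference V - Vbar
  vanishes at k1 and has derivative 2 (1 - k) (1/k0 - 1/k) > 0 on (k1, 1), so Vbar < V
  there and the integrand strictly dominates 1 / sqrt (\<eta> - Vbar). Since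
  \<eta> - Vbar k = (1 + 1/k0) (a^2 - (1 - k)^2), the latter integrates to the arcsin expression.
  For k1 = kmin one has \<eta> - H = (1 + 1/k0) (1 - kmin)^2, whence a = 1 - kmin.
*)

lemma has_integral_inverse_sqrt:
  fixes s t :: real
  assumes "s \<le> t"
  shows "((\<lambda>k. 1 / sqrt (k - s)) has_integral 2 * sqrt (t - s)) {s..t}"
proof -
  have "((\<lambda>k. 1 / sqrt (k - s)) has_integral 2 * sqrt (t - s) - 2 * sqrt (s - s)) {s..t}"
  proof (rule fundamental_theorem_of_calculus_interior[OF assms])
    show "continuous_on {s..t} (\<lambda>k. 2 * sqrt (k - s))"
      by (intro continuous_intros)
  next
    fix x assume "x \<in> {s<..<t}"
    then have "((\<lambda>k. sqrt (k - s)) has_real_derivative inverse (sqrt (x - s)) / 2) (at x)"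
      by (auto intro!: derivative_eq_intros)
    from DERIV_cmult[OF this, of 2]
    have "((\<lambda>k. 2 * sqrt (k - s)) has_real_derivative 1 / sqrt (x - s)) (at x)"
      by (simp add: inverse_eq_divide)
    then show "((\<lambda>k. 2 * sqrt (k - s)) has_vector_derivative 1 / sqrt (x - s)) (at x)"
      by (simp add: has_real_derivative_iff_has_vector_derivative)
  qed
  then show ?thesis
    by simp
qed

lemma has_integral_inverse_sqrt_arcsin:
  fixes a c s t :: real
  assumes "0 < a" "c - a \<le> s" "s \<le> t" "t \<le> c + a"
  shows "((\<lambda>k. 1 / sqrt (a^2 - (c - k)^2)) has_integral
           arcsin ((c - s) / a) - arcsin ((c - t) / a)) {s..t}"
proof -
  have "((\<lambda>k. 1 / sqrt (a^2 - (c - k)^2)) has_integral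
           (- arcsin ((c - t) / a)) - (- arcsin ((c - s) / a))) {s..t}"
  proof (rule fundamental_theorem_of_calculus_interior[OF \<open>s \<le> t\<close>])
    show "continuous_on {s..t} (\<lambda>k. - arcsin ((c - k) / a))"
      using assms by (intro continuous_intros) (auto simp: field_simps)
  next
    fix x assume x: "x \<in> {s<..<t}"
    then have u: "\<bar>(c - x) / a\<bar> < 1"
      using assms by (auto simp: field_simps abs_less_iff)
    have "sqrt (1 - ((c - x) / a)^2) = sqrt (a^2 - (c - x)^2) / a"
      using assms by (simp add: field_simps real_sqrt_divide)
    moreover have "0 < sqrt (1 - ((c - x) / a)^2)"
      using u by (simp add: abs_square_less_1)
    ultimately have "((\<lambda>k. - arcsin ((c - k) / a)) has_real_derivative
                       1 / sqrt (a^2 - (c - x)^2)) (at x)"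
      using u assms by (auto intro!: derivative_eq_intros simp: abs_less_iff field_simps)
    then show "((\<lambda>k. - arcsin ((c - k) / a)) has_vector_derivative
                  1 / sqrt (a^2 - (c - x)^2)) (at x)"
      by (simp add: has_real_derivative_iff_has_vector_derivative)
  qed
  then show ?thesis
    by simp
qed

lemma integral_less_real_halfopen:
  fixes f g :: "real \<Rightarrow> real"
  assumes "f integrable_on {s..t}" "g integrable_on {s..t}" "s < t"
    and "continuous_on {s<..t} f" "continuous_on {s<..t} g"
    and "\<And>x. x \<in> {s<..t} \<Longrightarrow> f x < g x"
  shows "integral {s..t} f < integral {s..t} g"
proof -
  define m where "m = (s + t) / 2"
  have m: "s < m" "m < t"
    using assms unfolding m_def by auto
  have "f integrable_on {s<..<m}" "g integrable_on {s<..<m}"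
    using assms m by (auto simp: integrable_on_open_interval_real intro: integrable_on_subinterval)
  then have "integral {s<..<m} f \<le> integral {s<..<m} g"
    using assms m by (intro integral_le) (auto simp: less_imp_le)
  then have "integral {s..m} f \<le> integral {s..m} g"
    by (simp add: integral_open_interval_real)
  moreover have "integral {m..t} f < integral {m..t} g"
    using assms m
    by (intro integral_less_real) (auto intro: continuous_on_subset)
  ultimately show ?thesis
    using Henstock_Kurzweil_Integration.integral_combine[OF _ _ assms(1), of m]
      Henstock_Kurzweil_Integration.integral_combine[OF _ _ assms(2), of m] m
    by simp
qed

lemma Vpot_ge_tangent:
  assumes "0 < x" "0 < y"
  shows "Vpot y + (2 * y - 2 / y) * (x - y) + (x - y)^2 \<le> Vpot x"
proof -
  have "ln (x / y) \<le> x / y - 1"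
    using assms by (intro ln_le_minus_one) simp
  moreover have "ln (x / y) = ln x - ln y"
    using assms by (simp add: ln_div)
  moreover have "(2 * y - 2 / y) * (x - y) + (x - y)^2 = x^2 - y^2 - 2 * (x / y) + 2"
    using assms by (simp add: field_simps power2_eq_square)
  ultimately show ?thesis
    unfolding Vpot_def by linarith
qed

lemma Vpot_strict_antimono:
  assumes "0 < x" "x < y" "y \<le> 1"
  shows "Vpot y < Vpot x"
proof -
  have "y * y \<le> 1"
    using assms by (intro mult_le_one) auto
  then have "2 * y - 2 / y \<le> 0"
    using assms by (simp add: field_simps)
  then have "0 \<le> (2 * y - 2 / y) * (x - y)"
    using assms by (intro mult_nonpos_nonpos) auto
  moreover have "0 < (x - y)^2"
    using assms by simp
  ultimately show ?thesis
    using Vpot_ge_tangent[of x y] assms by linarith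
qed

lemma Vpot_decrease_ge_linear:
  assumes "0 < s" "s \<le> x" "x \<le> m"
  shows "(2 / m - 2 * m) * (x - s) \<le> Vpot s - Vpot x"
proof -
  have "2 / m - 2 * m \<le> 2 / x - 2 * x"
    using assms by (smt (verit) frac_le)
  then have "(2 / m - 2 * m) * (x - s) \<le> (2 / x - 2 * x) * (x - s)"
    using assms by (intro mult_right_mono) auto
  moreover have "Vpot x + (2 * x - 2 / x) * (s - x) + (s - x)^2 \<le> Vpot s"
    using assms by (intro Vpot_ge_tangent) auto
  moreover have "(2 * x - 2 / x) * (s - x) = (2 / x - 2 * x) * (x - s)"
    by (simp add: algebra_simps diff_divide_distrib)
  ultimately show ?thesis
    using zero_le_power2[of "s - x"] by linarith
qed

lemma Vbar_less_Vpot: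
  assumes "0 < k0" "k0 \<le> s" "s < k" "k \<le> 1"
  shows "Vbar k0 (Vpot s - (1 + 1 / k0) * (s - 1)^2) k < Vpot k"
proof -
  define D where "D x = Vpot x - (1 + 1 / k0) * (x - 1)^2" for x
  have "D s < D k"
  proof (rule DERIV_pos_imp_increasing_open[OF \<open>s < k\<close>])
    fix x assume x: "s < x" "x < k"
    have "(D has_real_derivative (2 * x - 2 / x) - (1 + 1 / k0) * (2 * (x - 1))) (at x)"
      unfolding D_def Vpot_def using x assms
      by (auto intro!: derivative_eq_intros)
    moreover have "(2 * x - 2 / x) - (1 + 1 / k0) * (2 * (x - 1)) = 2 * (1 - x) * (1 / k0 - 1 / x)"
      using x assms by (simp add: field_simps)
    moreover have "0 < 2 * (1 - x) * (1 / k0 - 1 / x)"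
      using x assms by (intro mult_pos_pos) (auto simp: field_simps)
    ultimately show "\<exists>y. (D has_real_derivative y) (at x) \<and> 0 < y"
      by auto
  next
    show "continuous_on {s..k} D"
      unfolding D_def Vpot_def using assms by (intro continuous_intros) auto
  qed
  then show ?thesis
    unfolding D_def Vbar_def by simp
qed

lemma inverse_sqrt_Vpot_le:
  assumes "0 < s" "s < x" "x \<le> m" "m < 1" "Vpot s \<le> e"
  shows "0 \<le> 1 / sqrt (e - Vpot x)"
    and "1 / sqrt (e - Vpot x) \<le> 1 / sqrt (2 / m - 2 * m) * (1 / sqrt (x - s))"
proof -
  have "m * m < 1 * 1"
    using assms by (intro mult_strict_mono) auto
  then have pos: "0 < (2 / m - 2 * m) * (x - s)"
    using assms by (intro mult_pos_pos) (auto simp: field_simps)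
  moreover have lin: "(2 / m - 2 * m) * (x - s) \<le> e - Vpot x"
    using Vpot_decrease_ge_linear[of s x m] assms by linarith
  ultimately show "0 \<le> 1 / sqrt (e - Vpot x)"
    by simp
  have "1 / sqrt (e - Vpot x) \<le> 1 / sqrt ((2 / m - 2 * m) * (x - s))"
    using pos lin by (intro divide_left_mono real_sqrt_le_mono) auto
  then show "1 / sqrt (e - Vpot x) \<le> 1 / sqrt (2 / m - 2 * m) * (1 / sqrt (x - s))"
    by (simp add: real_sqrt_mult)
qed

lemma integrable_inverse_sqrt_Vpot:
  assumes "0 < s" "s < t" "t \<le> 1" "Vpot s \<le> e"
  shows "(\<lambda>k. 1 / sqrt (e - Vpot k)) integrable_on {s..t}"
proof -
  define f where "f k = 1 / sqrt (e - Vpot k)" for k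
  define m where "m = (s + t) / 2"
  have m: "s < m" "m < t" "m < 1"
    using assms unfolding m_def by auto
  have "0 < k \<and> 0 < e - Vpot k" if "k \<in> {m..t}" for k
    using Vpot_strict_antimono[of s k] m assms that by auto
  then have "continuous_on {m..t} f"
    unfolding f_def Vpot_def by (intro continuous_intros) fastforce+
  then have right: "f integrable_on {m..t}"
    by (rule integrable_continuous_interval)
  define h where "h k = 1 / sqrt (2 / m - 2 * m) * (1 / sqrt (k - s)) + \<bar>f s\<bar>" for k
  have "f \<in> borel_measurable (lebesgue_on {s..m})"
    unfolding f_def Vpot_def
    by (rule measurable_restrict_space1[OF measurable_completion]) measurable
  moreover have "h integrable_on {s..m}"
    unfolding h_def using has_integral_integrable[OF has_integral_inverse_sqrt[of s m]] m
    by (intro integrable_add integrable_const_ivl integrable_on_mult_right) auto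
  moreover have "\<bar>f x\<bar> \<le> h x" if "x \<in> {s..m}" for x
  proof (cases "x = s")
    case True
    \<comment> \<open>here \<open>h s = \<bar>f s\<bar>\<close>, because \<open>1 / sqrt 0 = 0\<close>\<close>
    then show ?thesis by (simp add: h_def)
  next
    case False
    with that have "0 \<le> f x" "f x \<le> 1 / sqrt (2 / m - 2 * m) * (1 / sqrt (x - s))"
      using inverse_sqrt_Vpot_le[of s x m e] assms m unfolding f_def by auto
    moreover have "0 \<le> f s"
      unfolding f_def using assms by simp
    ultimately show ?thesis
      unfolding h_def by simp
  qed
  moreover have "{s..m} \<in> sets lebesgue"
    by simp
  ultimately have left: "f integrable_on {s..m}"
    by (rule measurable_bounded_by_integrable_imp_integrable_real)
  show ?thesis
    using Henstock_Kurzweil_Integration.integrable_combine[OF _ _ left right] m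
    unfolding f_def by simp
qed

lemma integral_inverse_sqrt_Vpot_gt_arcsin:
  fixes e k0 k1 k2 :: real
  defines "H \<equiv> Vpot k1 - (1 + 1 / k0) * (k1 - 1)^2"
  defines "a \<equiv> sqrt ((e - H) / (1 + 1 / k0))"
  assumes "0 < k0" "k0 \<le> k1" "k1 < k2" "k2 \<le> 1" "Vpot k1 \<le> e"
  shows "1 / sqrt (1 + 1 / k0) * (arcsin ((1 - k1) / a) - arcsin ((1 - k2) / a))
           < integral {k1..k2} (\<lambda>k. 1 / sqrt (e - Vpot k))"
proof -
  define K where "K = 1 + 1 / k0"
  have "0 < K"
    unfolding K_def using assms by (simp add: add_pos_pos)
  have "K * (1 - k1)^2 \<le> e - H"
    unfolding H_def K_def using assms by (simp add: power2_commute)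
  then have "(1 - k1)^2 \<le> (e - H) / K"
    using \<open>0 < K\<close> by (simp add: pos_le_divide_eq mult.commute)
  then have a_ge: "1 - k1 \<le> a"
    unfolding a_def K_def[symmetric] using assms by (metis real_le_rsqrt)
  have "0 < a"
    using a_ge assms by linarith
  have "a^2 = (e - H) / K"
    unfolding a_def K_def[symmetric] using \<open>(1 - k1)^2 \<le> (e - H) / K\<close>
    by (meson order_trans real_sqrt_pow2 zero_le_power2)
  then have parabola: "e - Vbar k0 H k = K * (a^2 - (1 - k)^2)" for k
    unfolding Vbar_def K_def[symmetric] using \<open>0 < K\<close>
    by (simp add: field_simps power2_commute)
  define g where "g k = 1 / sqrt K * (1 / sqrt (a^2 - (1 - k)^2))" for k
  have g_eq: "g k = 1 / sqrt (e - Vbar k0 H k)" for k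
    unfolding g_def parabola real_sqrt_mult by simp
  have "(g has_integral 1 / sqrt K * (arcsin ((1 - k1) / a) - arcsin ((1 - k2) / a))) {k1..k2}"
    unfolding g_def using assms a_ge \<open>0 < a\<close>
    by (intro has_integral_mult_right has_integral_inverse_sqrt_arcsin) auto
  moreover have "integral {k1..k2} g < integral {k1..k2} (\<lambda>k. 1 / sqrt (e - Vpot k))"
  proof (rule integral_less_real_halfopen)
    have between: "0 < k" "0 < e - Vpot k" "0 < e - Vbar k0 H k" "Vbar k0 H k < Vpot k"
      if "k \<in> {k1<..k2}" for k
      using that assms Vpot_strict_antimono[of k1 k] Vbar_less_Vpot[of k0 k1 k] by auto
    show "g integrable_on {k1..k2}"
      using calculation by blast
    show "(\<lambda>k. 1 / sqrt (e - Vpot k)) integrable_on {k1..k2}"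
      using assms by (intro integrable_inverse_sqrt_Vpot) auto
    show "continuous_on {k1<..k2} (\<lambda>k. 1 / sqrt (e - Vpot k))"
      using between unfolding Vpot_def by (intro continuous_intros) force+
    show "continuous_on {k1<..k2} g"
      using between unfolding g_eq Vbar_def by (intro continuous_intros) force+
    show "g k < 1 / sqrt (e - Vpot k)" if "k \<in> {k1<..k2}" for k
      unfolding g_eq using between[OF that]
      by (intro divide_strict_left_mono real_sqrt_less_mono) auto
  qed (use assms in auto)
  ultimately show ?thesis
    unfolding K_def by (simp add: integral_unique)
qed

theorem mainTheorem8:
  fixes c k0 k1 kmin :: real
  defines "\<eta> \<equiv> 1 + 2 * ln c"
  defines "H \<equiv> Vpot k1 - (1 + 1 / k0) * (k1 - 1)^2"
  defines "a \<equiv> sqrt ((\<eta> - H) / (1 + 1 / k0))"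
  assumes hc: "c \<ge> 1"
    and hkmin: "0 < kmin" "kmin \<le> 1" "Vpot kmin = \<eta>"
    and hk1: "kmin \<le> k1" "k1 < 1"
    and hk0: "0 < k0" "k0 \<le> k1"
  shows "(\<forall>k\<in>{k1<..<1}. Vpot k > Vbar k0 H k)
    \<and> (\<forall>k2. k1 < k2 \<and> k2 \<le> 1 \<longrightarrow>
          integral {k1..k2} (\<lambda>k. 1 / sqrt (\<eta> - Vpot k))
            > 1 / sqrt (1 + 1 / k0) * (arcsin ((1 - k1) / a) - arcsin ((1 - k2) / a)))
    \<and> (k1 = kmin \<longrightarrow> a = 1 - kmin)"
proof (intro conjI allI impI ballI)
  show "Vbar k0 H k < Vpot k" if "k \<in> {k1<..<1}" for k
    unfolding H_def using Vbar_less_Vpot hk0 that by auto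
  have "Vpot k1 \<le> \<eta>"
    using hkmin hk1 Vpot_strict_antimono[of kmin k1] by (cases "k1 = kmin") auto
  then show "1 / sqrt (1 + 1 / k0) * (arcsin ((1 - k1) / a) - arcsin ((1 - k2) / a))
               < integral {k1..k2} (\<lambda>k. 1 / sqrt (\<eta> - Vpot k))"
    if "k1 < k2 \<and> k2 \<le> 1" for k2
    using integral_inverse_sqrt_Vpot_gt_arcsin[of k0 k1 k2 \<eta>] that hk0
    unfolding H_def a_def by auto
  show "a = 1 - kmin" if "k1 = kmin"
  proof -
    have "0 < 1 + 1 / k0"
      using hk0 by (simp add: add_pos_pos)
    then have "(\<eta> - H) / (1 + 1 / k0) = (1 - kmin)^2"
      unfolding H_def using that hkmin by (simp add: power2_commute)
    then show ?thesis
      unfolding a_def using hk1 that by simp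
  qed
qed

end
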